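(* In the setting of the context, for every $(x,t)\in[0,1]\times[0,\infty)$ the map $(0,1]\ni\gamma\mapsto u_\gamma(x,t)$ is nondecreasing and continuous, with $u_1(x,t)=Z(x,t)$ and $\lim_{\gamma\to0}u_\gamma(x,t)=X(x,t)$, where \[ X(x,t)=\frac{mf}{\sigma}+\frac{x-\frac{mf}{\sigma}}{1+\frac{\sigma(1-x)}{\sigma-mf}\big(e^{(\sigma-mf)t}-1\big)},\qquad Z(x,t)=1-\frac{(1-x)e^{(\sigma-mf)t}}{1+(1-x)(e^{\sigma t}-1)}. \] Moreover, both the continuity and the convergence are uniform with respect to $(x,t)$ in each compact set $[0,1]\times[0,T]$, $T>0$.
   Context: Fix constants $\sigma>0$, $f>0$, $m>0$ with $\sigma>mf$. For $\gamma\in(0,1]$ let $u_\gamma$ be the unique (mild, in fact classical) solution of \[ \partial_tu_\gamma+\sigma x(1-x)\partial_xu_\gamma=\frac{mf}{\gamma}\big[u_\gamma(x+\gamma(1-x),t)-u_\gamma(x,t)\big]\ (0\le x\le1,\ t>0),\quad u_\gamma(x,0)=x. \] (This is the expected frequency of the low-fitness species when mutations occur only towards it, with jump size $\gamma$ and time intensity $\lambda=m/\gamma$, fitness $f$ of the high-fitness species and selection rate $\sigma$.) *)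

theory Defs
  imports "HOL-Analysis.Analysis"
begin

text \<open>Classical solution of
  d_t v + sigma x (1-x) d_x v = (m f / gamma) [v(x + gamma(1-x), t) - v(x,t)]
  on [0,1] x [0,oo), v(x,0) = x.  The function v is jointly continuous on
  [0,1] x [0,oo) and (Frechet) differentiable in (x,t) on [0,1] x (0,oo)
  (one-sided in x at the endpoints), with partial derivatives Dx, Dt.\<close>

definition is_solution :: "real \<Rightarrow> real \<Rightarrow> real \<Rightarrow> real \<Rightarrow> (real \<Rightarrow> real \<Rightarrow> real) \<Rightarrow> bool" where
  "is_solution \<sigma> f m \<gamma> v \<longleftrightarrow>
     continuous_on ({0..1} \<times> {0..}) (\<lambda>(x, t). v x t) \<and>
     (\<forall>x\<in>{0..1}. v x 0 = x) \<and>
     (\<forall>x\<in>{0..1}. \<forall>t>0. \<exists>Dx Dt.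
        ((\<lambda>(y, s). v y s) has_derivative (\<lambda>(h, k). h * Dx + k * Dt))
          (at (x, t) within {0..1} \<times> {0<..}) \<and>
        Dt + \<sigma> * x * (1 - x) * Dx = (m * f / \<gamma>) * (v (x + \<gamma> * (1 - x)) t - v x t))"

definition X_lim :: "real \<Rightarrow> real \<Rightarrow> real \<Rightarrow> real \<Rightarrow> real \<Rightarrow> real" where
  "X_lim \<sigma> f m x t = m * f / \<sigma> +
     (x - m * f / \<sigma>) / (1 + \<sigma> * (1 - x) / (\<sigma> - m * f) * (exp ((\<sigma> - m * f) * t) - 1))"

definition Z_one :: "real \<Rightarrow> real \<Rightarrow> real \<Rightarrow> real \<Rightarrow> real \<Rightarrow> real" where
  "Z_one \<sigma> f m x t = 1 - (1 - x) * exp ((\<sigma> - m * f) * t) / (1 + (1 - x) * (exp (\<sigma> * t) - 1))"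

end

theory Submission
  imports Defs
begin

text \<open>Everything rests on a comparison principle for the nonlocal transport operator
  \<open>L\<^sub>\<gamma> w = \<partial>\<^sub>t w + \<sigma> x (1 - x) \<partial>\<^sub>x w - (m f / \<gamma>) (w (x + \<gamma> (1 - x)) - w x)\<close>:
  at a positive maximum of the difference of a subsolution and a supersolution the degenerate
  drift vanishes (at an interior critical point or at an endpoint) and the jump term is
  nonpositive, so the difference cannot become positive. The same maximum argument, run on
  pairs and triples of points, shows that every \<open>u\<^sub>\<gamma>(\<cdot>, t)\<close> is nondecreasing and convex.
  Convexity makes the jump quotient \<open>(u (x + \<gamma> (1 - x)) - u x) / \<gamma>\<close> nondecreasing in \<open>\<gamma>\<close>,
  so \<open>u\<^sub>\<gamma>\<^sub>2\<close> is a supersolution of the \<open>\<gamma>\<^sub>1\<close>-equation when \<open>\<gamma>\<^sub>1 \<le> \<gamma>\<^sub>2\<close>.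
  \<open>Z\<close> solves the equation with \<open>\<gamma> = 1\<close> exactly, and \<open>X\<close> is a subsolution of every
  \<open>\<gamma>\<close>-equation whose residual is at least \<open>-C(T) \<gamma>\<close>, whence \<open>X \<le> u\<^sub>\<gamma> \<le> X + C(T) \<gamma> t\<close>.
  Finally \<open>u\<^sub>\<gamma>\<^sub>0\<close> solves the \<open>\<gamma>\<close>-equation up to the difference of its jump quotients at \<open>\<gamma>\<close>
  and \<open>\<gamma>\<^sub>0\<close>, which is uniformly small by compactness; comparison turns this into uniform
  continuity of \<open>\<gamma> \<mapsto> u\<^sub>\<gamma>\<close>.\<close>

section \<open>Sub- and supersolutions\<close>

definition partials_at :: "(real \<Rightarrow> real \<Rightarrow> real) \<Rightarrow> real \<Rightarrow> real \<Rightarrow> real \<Rightarrow> real \<Rightarrow> bool" where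
  "partials_at w x t Dx Dt \<longleftrightarrow>
     ((\<lambda>s. w x s) has_real_derivative Dt) (at t within {0<..}) \<and>
     ((\<lambda>y. w y t) has_real_derivative Dx) (at x within {0..1})"

definition residual ::
    "real \<Rightarrow> real \<Rightarrow> real \<Rightarrow> real \<Rightarrow> (real \<Rightarrow> real \<Rightarrow> real) \<Rightarrow> real \<Rightarrow> real \<Rightarrow> real \<Rightarrow> real \<Rightarrow> real" where
  "residual \<sigma> f m \<gamma> w x t Dx Dt =
     Dt + \<sigma> * x * (1 - x) * Dx - m * f / \<gamma> * (w (x + \<gamma> * (1 - x)) t - w x t)"

definition subsolution ::
    "real \<Rightarrow> real \<Rightarrow> real \<Rightarrow> real \<Rightarrow> real \<Rightarrow> real \<Rightarrow> (real \<Rightarrow> real \<Rightarrow> real) \<Rightarrow> bool" where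
  "subsolution \<sigma> f m \<gamma> T \<delta> w \<longleftrightarrow>
     (\<forall>x\<in>{0..1}. \<forall>t\<in>{0<..T}. \<exists>Dx Dt. partials_at w x t Dx Dt \<and> residual \<sigma> f m \<gamma> w x t Dx Dt \<le> \<delta>)"

definition supersolution ::
    "real \<Rightarrow> real \<Rightarrow> real \<Rightarrow> real \<Rightarrow> real \<Rightarrow> real \<Rightarrow> (real \<Rightarrow> real \<Rightarrow> real) \<Rightarrow> bool" where
  "supersolution \<sigma> f m \<gamma> T \<delta> w \<longleftrightarrow>
     (\<forall>x\<in>{0..1}. \<forall>t\<in>{0<..T}. \<exists>Dx Dt. partials_at w x t Dx Dt \<and> residual \<sigma> f m \<gamma> w x t Dx Dt \<ge> \<delta>)"

lemma has_derivative_partials_within: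
  fixes g :: "real \<Rightarrow> real \<Rightarrow> real"
  assumes D: "((\<lambda>(y, s). g y s) has_derivative (\<lambda>(h, k). h * Dx + k * Dt)) (at (x, t) within A \<times> B)"
    and "x \<in> A" "t \<in> B"
  shows "((\<lambda>y. g y t) has_real_derivative Dx) (at x within A)"
    and "((\<lambda>s. g x s) has_real_derivative Dt) (at t within B)"
proof -
  have "((\<lambda>y. (\<lambda>(y, s). g y s) (y, t)) has_derivative (\<lambda>h. (\<lambda>(h, k). h * Dx + k * Dt) (h, 0)))
      (at x within A)"
    by (rule has_derivative_in_compose[OF has_derivative_Pair[OF has_derivative_ident has_derivative_const]
          has_derivative_subset[OF D]]) (use assms in auto)
  then show "((\<lambda>y. g y t) has_real_derivative Dx) (at x within A)"
    by (simp add: has_field_derivative_def mult_commute_abs)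
  have "((\<lambda>s. (\<lambda>(y, s). g y s) (x, s)) has_derivative (\<lambda>k. (\<lambda>(h, k). h * Dx + k * Dt) (0, k)))
      (at t within B)"
    by (rule has_derivative_in_compose[OF has_derivative_Pair[OF has_derivative_const has_derivative_ident]
          has_derivative_subset[OF D]]) (use assms in auto)
  then show "((\<lambda>s. g x s) has_real_derivative Dt) (at t within B)"
    by (simp add: has_field_derivative_def mult_commute_abs)
qed

lemma solution_partials:
  assumes "is_solution \<sigma> f m \<gamma> v" "x \<in> {0..1}" "t > 0"
  obtains Dx Dt where "partials_at v x t Dx Dt" "residual \<sigma> f m \<gamma> v x t Dx Dt = 0"
proof -
  obtain Dx Dt where
    D: "((\<lambda>(y, s). v y s) has_derivative (\<lambda>(h, k). h * Dx + k * Dt)) (at (x, t) within {0..1} \<times> {0<..})"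
    and E: "Dt + \<sigma> * x * (1 - x) * Dx = m * f / \<gamma> * (v (x + \<gamma> * (1 - x)) t - v x t)"
    using assms unfolding is_solution_def by blast
  have "partials_at v x t Dx Dt"
    unfolding partials_at_def using has_derivative_partials_within[OF D] assms by simp
  moreover have "residual \<sigma> f m \<gamma> v x t Dx Dt = 0"
    using E by (simp add: residual_def)
  ultimately show thesis by (rule that)
qed

lemma solution_continuous_on:
  assumes "is_solution \<sigma> f m \<gamma> v"
  shows "continuous_on ({0..1} \<times> {0..T}) (\<lambda>(x, t). v x t)"
  using assms unfolding is_solution_def by (auto elim: continuous_on_subset)

lemma solution_initial: "is_solution \<sigma> f m \<gamma> v \<Longrightarrow> x \<in> {0..1} \<Longrightarrow> v x 0 = x"
  unfolding is_solution_def by blast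

lemma solution_sub_super:
  assumes "is_solution \<sigma> f m \<gamma> v"
  shows "subsolution \<sigma> f m \<gamma> T 0 v" "supersolution \<sigma> f m \<gamma> T 0 v"
  unfolding subsolution_def supersolution_def
  by (metis solution_partials[OF assms] greaterThanAtMost_iff order_refl)+

lemma continuous_on_compose_rectangle:
  fixes v :: "real \<Rightarrow> real \<Rightarrow> real"
  assumes "continuous_on ({0..1} \<times> {0..T}) (\<lambda>(x, t). v x t)"
    and "continuous_on S a" "continuous_on S b" "\<forall>p\<in>S. a p \<in> {0..1} \<and> b p \<in> {0..T}"
  shows "continuous_on S (\<lambda>p. v (a p) (b p))"
  using continuous_on_compose2[OF assms(1) continuous_on_Pair[OF assms(2,3)]] assms(4)
  by (auto simp: image_subset_iff)

section \<open>A maximum principle\<close>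

lemma deriv_nonneg_at_left_max:
  fixes h :: "real \<Rightarrow> real"
  assumes "(h has_real_derivative D) (at t within {0<..})" "t > 0" "\<forall>s\<in>{0<..t}. h s \<le> h t"
  shows "D \<ge> 0"
proof (rule tendsto_lowerbound)
  have "((\<lambda>y. (h y - h t) / (y - t)) \<longlongrightarrow> D) (at t within {0<..})"
    using assms(1) by (simp add: has_field_derivative_iff)
  then show "((\<lambda>y. (h y - h t) / (y - t)) \<longlongrightarrow> D) (at t within {0<..<t})"
    by (rule tendsto_within_subset) auto
  show "\<forall>\<^sub>F y in at t within {0<..<t}. 0 \<le> (h y - h t) / (y - t)"
    unfolding eventually_at_filter using assms(3) by (auto intro!: always_eventually divide_nonpos_neg)
  show "at t within {0<..<t} \<noteq> bot"
    using assms(2) by (simp add: at_within_eq_bot_iff)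
qed

text \<open>The proof maximises
  \<open>H k s - \<epsilon> s\<close> over the compact cylinder, which moves the maximum away from \<open>s = 0\<close> and
  makes the time derivative there at least \<open>\<epsilon>\<close>.\<close>

lemma max_principle:
  fixes H :: "'a::topological_space \<Rightarrow> real \<Rightarrow> real"
  assumes K: "compact K" and cont: "continuous_on (K \<times> {0..T}) (\<lambda>(k, s). H k s)"
    and init: "\<forall>k\<in>K. H k 0 \<le> 0"
    and at_max: "\<And>k s. k \<in> K \<Longrightarrow> s \<in> {0<..T} \<Longrightarrow> 0 < H k s \<Longrightarrow> \<forall>k'\<in>K. H k' s \<le> H k s \<Longrightarrow>
        \<exists>D. ((\<lambda>s. H k s) has_real_derivative D) (at s within {0<..}) \<and> D \<le> 0"
    and k: "k \<in> K" and s: "s \<in> {0..T}"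
  shows "H k s \<le> 0"
proof (rule ccontr)
  assume "\<not> H k s \<le> 0"
  define \<epsilon> where "\<epsilon> = H k s / (2 * (s + 1))"
  have "\<epsilon> > 0" and "\<epsilon> * (2 * (s + 1)) = H k s"
    using \<open>\<not> H k s \<le> 0\<close> s by (simp_all add: \<epsilon>_def)
  moreover have "\<epsilon> * s < \<epsilon> * (2 * (s + 1))"
    using \<open>\<epsilon> > 0\<close> s by (intro mult_strict_left_mono) auto
  ultimately have \<epsilon>: "\<epsilon> > 0" "\<epsilon> * s < H k s"
    by linarith+
  have "\<exists>p\<in>K \<times> {0..T}. \<forall>q\<in>K \<times> {0..T}. (\<lambda>(k, s). H k s - \<epsilon> * s) q \<le> (\<lambda>(k, s). H k s - \<epsilon> * s) p"
    using k s by (intro continuous_attains_sup compact_Times K compact_Icc)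
      (auto intro!: continuous_intros cont[unfolded split_beta'] simp: split_beta')
  then obtain k0 s0 where p: "k0 \<in> K" "s0 \<in> {0..T}"
    and max: "\<And>k' s'. k' \<in> K \<Longrightarrow> s' \<in> {0..T} \<Longrightarrow> H k' s' - \<epsilon> * s' \<le> H k0 s0 - \<epsilon> * s0"
    by auto
  have pos: "H k0 s0 - \<epsilon> * s0 > 0"
    using max[OF k s] \<epsilon> by linarith
  have "s0 \<noteq> 0"
    using pos init p by auto
  then have s0: "s0 \<in> {0<..T}" "0 < s0"
    using p by auto
  moreover have "0 < H k0 s0"
    using pos mult_pos_pos[OF \<epsilon>(1) s0(2)] by linarith
  moreover have "\<forall>k'\<in>K. H k' s0 \<le> H k0 s0"
    using max p by force
  ultimately obtain D where D: "((\<lambda>s. H k0 s) has_real_derivative D) (at s0 within {0<..})" "D \<le> 0"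
    using at_max p by blast
  have "D - \<epsilon> \<ge> 0"
  proof (rule deriv_nonneg_at_left_max[OF _ s0(2)])
    show "((\<lambda>s. H k0 s - \<epsilon> * s) has_real_derivative D - \<epsilon>) (at s0 within {0<..})"
      by (auto intro!: derivative_eq_intros D)
    show "\<forall>s\<in>{0<..s0}. H k0 s - \<epsilon> * s \<le> H k0 s0 - \<epsilon> * s0"
      using max p by auto
  qed
  then show False
    using D \<epsilon> by linarith
qed

text \<open>The drift \<open>\<sigma> x (1 - x)\<close> vanishes at the ends of \<open>[0, 1]\<close>, where one-sided maxima need
  not have zero derivative.\<close>

lemma deriv_degenerate_at_local_max:
  fixes g :: "real \<Rightarrow> real"
  assumes D: "(g has_real_derivative D) (at x within {0..1})" and x: "x \<in> {0..1}" and e: "e > 0"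
    and max: "\<forall>y\<in>{0..1}. \<bar>y - x\<bar> < e \<longrightarrow> g y \<le> g x"
  shows "x * (1 - x) * D = 0"
proof (cases "0 < x \<and> x < 1")
  case True
  then have "at x within {0..1} = at x"
    by (intro at_within_interior) simp
  with D have der: "(g has_real_derivative D) (at x)"
    by simp
  have "\<forall>y. \<bar>x - y\<bar> < min e (min x (1 - x)) \<longrightarrow> g y \<le> g x"
    using max by (auto simp: abs_minus_commute abs_less_iff)
  then have "D = 0"
    by (rule DERIV_local_max[OF der, rotated]) (use True e in simp)
  then show ?thesis by simp
next
  case False
  with x show ?thesis by auto
qed

lemma jump_in_unit_interval:
  fixes \<gamma> x :: real
  assumes "0 \<le> \<gamma>" "\<gamma> \<le> 1" "x \<in> {0..1}"
  shows "x + \<gamma> * (1 - x) \<in> {0..1}"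
  using assms mult_left_le_one_le[of "1 - x" \<gamma>] by auto

lemma comparison_principle:
  fixes v w :: "real \<Rightarrow> real \<Rightarrow> real"
  assumes \<gamma>: "0 < \<gamma>" "\<gamma> \<le> 1" and mf: "m * f \<ge> 0"
    and cv: "continuous_on ({0..1} \<times> {0..T}) (\<lambda>(x, t). v x t)"
    and cw: "continuous_on ({0..1} \<times> {0..T}) (\<lambda>(x, t). w x t)"
    and init: "\<forall>x\<in>{0..1}. v x 0 \<le> w x 0"
    and sub: "subsolution \<sigma> f m \<gamma> T a v" and super: "supersolution \<sigma> f m \<gamma> T b w"
    and x: "x \<in> {0..1}" and t: "t \<in> {0..T}"
  shows "v x t - w x t \<le> (a - b) * t"
proof -
  define H where "H x t = v x t - w x t - (a - b) * t" for x t
  have "H x t \<le> 0"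
  proof (rule max_principle[OF compact_Icc _ _ _ x t])
    show "continuous_on ({0..1} \<times> {0..T}) (\<lambda>(x, t). H x t)"
      using cv cw unfolding H_def by (auto intro!: continuous_intros simp: split_beta')
    show "\<forall>x\<in>{0..1}. H x 0 \<le> 0"
      using init by (simp add: H_def)
  next
    fix x s assume x: "x \<in> {0..1}" and s: "s \<in> {0<..T}" and max: "\<forall>y\<in>{0..1}. H y s \<le> H x s"
    obtain Dx Dt Ex Et where pv: "partials_at v x s Dx Dt" "residual \<sigma> f m \<gamma> v x s Dx Dt \<le> a"
      and pw: "partials_at w x s Ex Et" "residual \<sigma> f m \<gamma> w x s Ex Et \<ge> b"
      using sub super x s unfolding subsolution_def supersolution_def by meson
    have "((\<lambda>y. H y s) has_real_derivative Dx - Ex) (at x within {0..1})"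
      using pv pw unfolding H_def partials_at_def by (auto intro!: derivative_eq_intros)
    then have drift: "x * (1 - x) * (Dx - Ex) = 0"
      by (rule deriv_degenerate_at_local_max[OF _ x zero_less_one]) (use max in blast)
    have "H (x + \<gamma> * (1 - x)) s \<le> H x s"
      using max jump_in_unit_interval[of \<gamma> x] \<gamma> x by auto
    then have jump: "m * f / \<gamma> * ((v (x + \<gamma> * (1 - x)) s - w (x + \<gamma> * (1 - x)) s) - (v x s - w x s)) \<le> 0"
      using mf \<gamma> by (intro mult_nonneg_nonpos) (auto simp: H_def)
    have "((\<lambda>s. H x s) has_real_derivative Dt - Et - (a - b)) (at s within {0<..})"
      using pv pw unfolding H_def partials_at_def by (auto intro!: derivative_eq_intros)
    moreover have "Dt - Et - (a - b) \<le> 0"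
    proof -
      have "Dt - Et = residual \<sigma> f m \<gamma> v x s Dx Dt - residual \<sigma> f m \<gamma> w x s Ex Et
          - \<sigma> * (x * (1 - x) * (Dx - Ex))
          + m * f / \<gamma> * ((v (x + \<gamma> * (1 - x)) s - w (x + \<gamma> * (1 - x)) s) - (v x s - w x s))"
        by (simp add: residual_def algebra_simps)
      then show ?thesis
        using pv(2) pw(2) drift jump by simp
    qed
    ultimately show "\<exists>D. ((\<lambda>s. H x s) has_real_derivative D) (at s within {0<..}) \<and> D \<le> 0"
      by blast
  qed
  then show ?thesis
    by (simp add: H_def)
qed

section \<open>Monotonicity and convexity in \<open>x\<close>\<close>

lemma jump_mono:
  fixes \<gamma> a b :: real
  assumes "\<gamma> \<le> 1" "a \<le> b"
  shows "a + \<gamma> * (1 - a) \<le> b + \<gamma> * (1 - b)"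
  using assms mult_left_mono[of a b "1 - \<gamma>"] by (simp add: algebra_simps)

lemma solution_difference_at_max:
  assumes sol: "is_solution \<sigma> f m \<gamma> v" and \<gamma>: "0 < \<gamma>" "\<gamma> \<le> 1" and mf: "m * f \<ge> 0"
    and ab: "0 \<le> a" "a < b" "b \<le> 1" and s: "0 < s"
    and max: "\<forall>a'\<in>{0..1}. \<forall>b'\<in>{0..1}. a' \<le> b' \<longrightarrow> v a' s - v b' s \<le> v a s - v b s"
  shows "\<exists>D. ((\<lambda>s. v a s - v b s) has_real_derivative D) (at s within {0<..}) \<and> D \<le> 0"
proof -
  have a: "a \<in> {0..1}" and b: "b \<in> {0..1}"
    using ab by auto
  obtain Dxa Dta where pa: "partials_at v a s Dxa Dta" "residual \<sigma> f m \<gamma> v a s Dxa Dta = 0"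
    by (rule solution_partials[OF sol a s])
  obtain Dxb Dtb where pb: "partials_at v b s Dxb Dtb" "residual \<sigma> f m \<gamma> v b s Dxb Dtb = 0"
    by (rule solution_partials[OF sol b s])
  have "((\<lambda>y. v y s) has_real_derivative Dxa) (at a within {0..1})"
    using pa(1) by (simp add: partials_at_def)
  then have "a * (1 - a) * Dxa = 0"
    by (rule deriv_degenerate_at_local_max[OF _ a, where e = "b - a"])
      (use max[rule_format, of y b for y] ab in \<open>auto simp: abs_less_iff\<close>)
  moreover have "((\<lambda>y. - v y s) has_real_derivative - Dxb) (at b within {0..1})"
    using pb(1) by (simp add: partials_at_def DERIV_minus)
  then have "b * (1 - b) * - Dxb = 0"
    by (rule deriv_degenerate_at_local_max[OF _ b, where e = "b - a"])
      (use max[rule_format, of a y for y] ab in \<open>auto simp: abs_less_iff\<close>)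
  ultimately have za: "\<sigma> * a * (1 - a) * Dxa = 0" and zb: "\<sigma> * b * (1 - b) * Dxb = 0"
    by (simp_all add: mult.assoc)
  have Dta: "Dta = m * f / \<gamma> * (v (a + \<gamma> * (1 - a)) s - v a s)"
    using pa(2) unfolding residual_def za add_0_right right_minus_eq .
  have Dtb: "Dtb = m * f / \<gamma> * (v (b + \<gamma> * (1 - b)) s - v b s)"
    using pb(2) unfolding residual_def zb add_0_right right_minus_eq .
  have "v (a + \<gamma> * (1 - a)) s - v (b + \<gamma> * (1 - b)) s \<le> v a s - v b s"
    using max jump_in_unit_interval[of \<gamma>] jump_mono[of \<gamma> a b] \<gamma> a b ab by simp
  then have "Dta - Dtb \<le> 0"
    unfolding Dta Dtb right_diff_distrib[symmetric] using mf \<gamma>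
    by (intro mult_nonneg_nonpos) auto
  moreover have "((\<lambda>s. v a s - v b s) has_real_derivative Dta - Dtb) (at s within {0<..})"
    using pa pb by (auto intro!: derivative_eq_intros simp: partials_at_def)
  ultimately show ?thesis
    by blast
qed

lemma solution_mono_x:
  assumes sol: "is_solution \<sigma> f m \<gamma> v" and \<gamma>: "0 < \<gamma>" "\<gamma> \<le> 1" and mf: "m * f \<ge> 0"
    and t: "t \<ge> 0"
  shows "mono_on {0..1} (\<lambda>x. v x t)"
proof (rule mono_onI)
  define K where "K = ({0..1} \<times> {0..1}) \<inter> {p :: real \<times> real. fst p \<le> snd p}"
  define H where "H = (\<lambda>(a, b) s. v a s - v b s)"
  fix x z :: real assume "x \<in> {0..1}" "z \<in> {0..1}" "x \<le> z"
  then have xz: "(x, z) \<in> K"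
    by (simp add: K_def)
  have "H (x, z) t \<le> 0"
  proof (rule max_principle[where T = t and H = H, OF _ _ _ _ xz])
    show "compact K"
      unfolding K_def by (intro compact_Int_closed compact_Times compact_Icc closed_Collect_le continuous_intros)
    have "continuous_on (K \<times> {0..t}) (\<lambda>p. v (fst (fst p)) (snd p))"
      "continuous_on (K \<times> {0..t}) (\<lambda>p. v (snd (fst p)) (snd p))"
      by (rule continuous_on_compose_rectangle[OF solution_continuous_on[OF sol]];
          auto intro!: continuous_intros simp: K_def)+
    then show "continuous_on (K \<times> {0..t}) (\<lambda>(k, s). H k s)"
      unfolding H_def by (auto intro!: continuous_intros simp: split_beta')
    show "\<forall>k\<in>K. H k 0 \<le> 0"
      by (auto simp: K_def H_def solution_initial[OF sol])
    fix k s assume k: "k \<in> K" and s: "s \<in> {0<..t}" and pos: "0 < H k s"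
      and max: "\<forall>k'\<in>K. H k' s \<le> H k s"
    obtain a b where k_eq: "k = (a, b)"
      by force
    have "a \<noteq> b"
      using pos by (auto simp: H_def k_eq)
    with k have "0 \<le> a" "a < b" "b \<le> 1"
      by (auto simp: K_def k_eq)
    moreover have "\<forall>a'\<in>{0..1}. \<forall>b'\<in>{0..1}. a' \<le> b' \<longrightarrow> v a' s - v b' s \<le> v a s - v b s"
      using max[rule_format, of "(a', b')" for a' b'] by (simp add: K_def H_def k_eq)
    ultimately show "\<exists>D. ((\<lambda>s. H k s) has_real_derivative D) (at s within {0<..}) \<and> D \<le> 0"
      using solution_difference_at_max[OF sol \<gamma> mf] s by (simp add: H_def k_eq)
  qed (use t in simp)
  then show "v x t \<le> v z t"
    by (simp add: H_def)
qed

lemma deriv_eq_at_affine_local_max: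
  fixes g :: "real \<Rightarrow> real"
  assumes Dc: "(g has_real_derivative Dc) (at (l * y0 + c))"
    and D: "(g has_real_derivative D) (at y0 within {0..1})"
    and y0: "y0 \<in> {0..1}" and l: "l \<noteq> 0"
    and max: "\<forall>y\<in>{0..1}. g (l * y + c) - l * g y \<le> g (l * y0 + c) - l * g y0"
  shows "y0 * (1 - y0) * D = y0 * (1 - y0) * Dc"
proof -
  have "((\<lambda>y. l * y + c) has_real_derivative l) (at y0 within {0..1})"
    by (auto intro!: derivative_eq_intros)
  from DERIV_chain2[OF Dc this]
  have "((\<lambda>y. g (l * y + c) - l * g y) has_real_derivative Dc * l - l * D) (at y0 within {0..1})"
    by (intro DERIV_diff DERIV_cmult D)
  then have "y0 * (1 - y0) * (Dc * l - l * D) = 0"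
    by (rule deriv_degenerate_at_local_max[OF _ y0 zero_less_one]) (use max in blast)
  then have "l * (y0 * (1 - y0) * D - y0 * (1 - y0) * Dc) = 0"
    by (simp add: algebra_simps)
  with l show ?thesis
    by simp
qed

definition convexity_defect :: "(real \<Rightarrow> real \<Rightarrow> real) \<Rightarrow> real \<Rightarrow> real \<Rightarrow> real \<Rightarrow> real \<Rightarrow> real" where
  "convexity_defect v a b l s = v ((1 - l) * a + l * b) s - (1 - l) * v a s - l * v b s"

lemma convex_combination_in_unit_interval:
  fixes a b l :: real
  assumes "a \<in> {0..1}" "b \<in> {0..1}" "l \<in> {0..1}"
  shows "(1 - l) * a + l * b \<in> {0..1}"
  using convexD[OF convex_real_interval(5)[of 0 1], of a b "1 - l" l] assms by simp

lemma convex_combination_strictly_inside: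
  fixes a b l :: real
  assumes "a \<in> {0..1}" "b \<in> {0..1}" "0 < l" "l < 1" "a \<noteq> b"
  shows "(1 - l) * a + l * b \<in> {0<..<1}"
proof -
  have "min a b < (1 - l) * a + l * b \<and> (1 - l) * a + l * b < max a b"
  proof (cases "a < b")
    case True
    then have "0 < l * (b - a)" "0 < (1 - l) * (b - a)"
      using assms by simp_all
    with True show ?thesis
      by (simp add: algebra_simps)
  next
    case False
    with assms have "0 < l * (a - b)" "0 < (1 - l) * (a - b)"
      by simp_all
    with False show ?thesis
      by (simp add: algebra_simps)
  qed
  with assms show ?thesis
    by auto
qed

lemma deriv_at_max_convexity_defect:
  fixes g :: "real \<Rightarrow> real"
  assumes Da: "(g has_real_derivative Da) (at a within {0..1})"
    and Db: "(g has_real_derivative Db) (at b within {0..1})"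
    and Dc: "(g has_real_derivative Dc) (at ((1 - l) * a + l * b))"
    and a: "a \<in> {0..1}" and b: "b \<in> {0..1}" and l: "0 < l" "l < 1"
    and max: "\<forall>a'\<in>{0..1}. \<forall>b'\<in>{0..1}. g ((1 - l) * a' + l * b') - (1 - l) * g a' - l * g b'
                \<le> g ((1 - l) * a + l * b) - (1 - l) * g a - l * g b"
  shows "a * (1 - a) * Da = a * (1 - a) * Dc" and "b * (1 - b) * Db = b * (1 - b) * Dc"
proof -
  show "a * (1 - a) * Da = a * (1 - a) * Dc"
  proof (rule deriv_eq_at_affine_local_max[OF Dc Da a])
    show "\<forall>y\<in>{0..1}. g ((1 - l) * y + l * b) - (1 - l) * g y \<le> g ((1 - l) * a + l * b) - (1 - l) * g a"
      using max b by fastforce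
  qed (use l in simp)
  have Dc': "(g has_real_derivative Dc) (at (l * b + (1 - l) * a))"
    using Dc by (simp add: add.commute)
  show "b * (1 - b) * Db = b * (1 - b) * Dc"
  proof (rule deriv_eq_at_affine_local_max[OF Dc' Db b])
    show "\<forall>y\<in>{0..1}. g (l * y + (1 - l) * a) - l * g y \<le> g (l * b + (1 - l) * a) - l * g b"
      using max a by (fastforce simp: add.commute)
  qed (use l in simp)
qed

lemma convexity_defect_rate_identity:
  fixes a b c l r \<sigma> D Dta Dtb Dtc pa pb pc va vb vc :: real
  assumes "c = (1 - l) * a + l * b"
    and "Dta = r * (pa - va) - \<sigma> * a * (1 - a) * D"
    and "Dtb = r * (pb - vb) - \<sigma> * b * (1 - b) * D"
    and "Dtc = r * (pc - vc) - \<sigma> * c * (1 - c) * D"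
  shows "Dtc - (1 - l) * Dta - l * Dtb
    = r * ((pc - (1 - l) * pa - l * pb) - (vc - (1 - l) * va - l * vb)) - \<sigma> * l * (1 - l) * (b - a)\<^sup>2 * D"
  unfolding assms by (simp add: power2_eq_square algebra_simps)

lemma solution_convexity_defect_at_max:
  assumes sol: "is_solution \<sigma> f m \<gamma> v" and \<gamma>: "0 < \<gamma>" "\<gamma> \<le> 1" and mf: "m * f \<ge> 0"
    and \<sigma>: "\<sigma> \<ge> 0" and a: "a \<in> {0..1}" and b: "b \<in> {0..1}" and "l \<in> {0..1}" and s: "0 < s"
    and pos: "0 < convexity_defect v a b l s"
    and max: "\<forall>a'\<in>{0..1}. \<forall>b'\<in>{0..1}. convexity_defect v a' b' l s \<le> convexity_defect v a b l s"
  shows "\<exists>D. ((\<lambda>s. convexity_defect v a b l s) has_real_derivative D) (at s within {0<..}) \<and> D \<le> 0"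
proof -
  have "a \<noteq> b" "l \<noteq> 0" "l \<noteq> 1"
    using pos by (auto simp: convexity_defect_def algebra_simps)
  with \<open>l \<in> {0..1}\<close> have l: "0 < l" "l < 1"
    by auto
  define c where "c = (1 - l) * a + l * b"
  have c: "c \<in> {0<..<1}"
    unfolding c_def using convex_combination_strictly_inside[OF a b l \<open>a \<noteq> b\<close>] .
  then have c01: "c \<in> {0..1}" by simp
  obtain Dxa Dta where pa: "partials_at v a s Dxa Dta" "residual \<sigma> f m \<gamma> v a s Dxa Dta = 0"
    by (rule solution_partials[OF sol a s])
  obtain Dxb Dtb where pb: "partials_at v b s Dxb Dtb" "residual \<sigma> f m \<gamma> v b s Dxb Dtb = 0"
    by (rule solution_partials[OF sol b s])
  obtain Dxc Dtc where pc: "partials_at v c s Dxc Dtc" "residual \<sigma> f m \<gamma> v c s Dxc Dtc = 0"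
    by (rule solution_partials[OF sol c01 s])
  have "at c within {0..1} = at c"
    using c by (intro at_within_interior) simp
  then have dc: "((\<lambda>y. v y s) has_real_derivative Dxc) (at c)"
    using pc by (simp add: partials_at_def)
  have Dxc: "Dxc \<ge> 0"
    by (rule mono_on_imp_deriv_nonneg[OF solution_mono_x[OF sol \<gamma> mf] dc]) (use s c in auto)
  have "((\<lambda>y. v y s) has_real_derivative Dxa) (at a within {0..1})"
    "((\<lambda>y. v y s) has_real_derivative Dxb) (at b within {0..1})"
    using pa(1) pb(1) by (simp_all add: partials_at_def)
  from deriv_at_max_convexity_defect[OF this dc[unfolded c_def] a b l max[unfolded convexity_defect_def]]
  have "\<sigma> * a * (1 - a) * Dxa = \<sigma> * a * (1 - a) * Dxc" "\<sigma> * b * (1 - b) * Dxb = \<sigma> * b * (1 - b) * Dxc"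
    by (metis mult.assoc)+
  then have "Dtc - (1 - l) * Dta - l * Dtb
      = m * f / \<gamma> * ((v (c + \<gamma> * (1 - c)) s - (1 - l) * v (a + \<gamma> * (1 - a)) s - l * v (b + \<gamma> * (1 - b)) s)
               - (v c s - (1 - l) * v a s - l * v b s))
        - \<sigma> * l * (1 - l) * (b - a)\<^sup>2 * Dxc"
    using pa(2) pb(2) pc(2) unfolding residual_def
    by (intro convexity_defect_rate_identity[OF c_def]) linarith+
  also have "\<dots> \<le> 0"
  proof -
    have "c + \<gamma> * (1 - c) = (1 - l) * (a + \<gamma> * (1 - a)) + l * (b + \<gamma> * (1 - b))"
      by (simp add: c_def algebra_simps)
    then have "v (c + \<gamma> * (1 - c)) s - (1 - l) * v (a + \<gamma> * (1 - a)) s - l * v (b + \<gamma> * (1 - b)) s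
        \<le> v c s - (1 - l) * v a s - l * v b s"
      using max jump_in_unit_interval[of \<gamma>] \<gamma> a b by (simp add: convexity_defect_def c_def)
    then show ?thesis
      using mf \<gamma> \<sigma> l Dxc by (intro diff_le_0_iff_le[THEN iffD2] order.trans[OF mult_nonneg_nonpos]) auto
  qed
  finally have "Dtc - (1 - l) * Dta - l * Dtb \<le> 0" .
  moreover have "((\<lambda>s. convexity_defect v a b l s) has_real_derivative Dtc - (1 - l) * Dta - l * Dtb)
      (at s within {0<..})"
    using pa pb pc unfolding convexity_defect_def c_def[symmetric] partials_at_def
    by (auto intro!: derivative_eq_intros)
  ultimately show ?thesis
    by blast
qed

lemma solution_convex_x:
  assumes sol: "is_solution \<sigma> f m \<gamma> v" and \<gamma>: "0 < \<gamma>" "\<gamma> \<le> 1" and mf: "m * f \<ge> 0"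
    and \<sigma>: "\<sigma> \<ge> 0" and t: "t \<ge> 0"
  shows "convex_on {0..1} (\<lambda>x. v x t)"
proof -
  define K :: "(real \<times> real \<times> real) set" where "K = {0..1} \<times> {0..1} \<times> {0..1}"
  define H where "H = (\<lambda>(a, b, l). convexity_defect v a b l)"
  have compact: "compact K"
    unfolding K_def by (intro compact_Times compact_Icc)
  have "continuous_on (K \<times> {0..t}) (\<lambda>p. v ((1 - snd (snd (fst p))) * fst (fst p) + snd (snd (fst p)) * fst (snd (fst p))) (snd p))"
    "continuous_on (K \<times> {0..t}) (\<lambda>p. v (fst (fst p)) (snd p))"
    "continuous_on (K \<times> {0..t}) (\<lambda>p. v (fst (snd (fst p))) (snd p))"
    using convex_combination_in_unit_interval
    by (auto intro!: continuous_on_compose_rectangle[OF solution_continuous_on[OF sol]] continuous_intros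
        simp: K_def)
  then have cont: "continuous_on (K \<times> {0..t}) (\<lambda>(k, s). H k s)"
    unfolding H_def convexity_defect_def by (auto intro!: continuous_intros simp: split_beta')
  have init: "\<forall>k\<in>K. H k 0 \<le> 0"
  proof
    fix k assume "k \<in> K"
    then obtain a b l where k: "k = (a, b, l)" and abl: "a \<in> {0..1}" "b \<in> {0..1}" "l \<in> {0..1}"
      by (auto simp: K_def)
    then show "H k 0 \<le> 0"
      using solution_initial[OF sol convex_combination_in_unit_interval[OF abl]]
      by (simp add: H_def convexity_defect_def solution_initial[OF sol])
  qed
  have at_max: "\<exists>D. ((\<lambda>s. H k s) has_real_derivative D) (at s within {0<..}) \<and> D \<le> 0"
    if "k \<in> K" "s \<in> {0<..t}" "0 < H k s" "\<forall>k'\<in>K. H k' s \<le> H k s" for k s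
    using that solution_convexity_defect_at_max[OF sol \<gamma> mf \<sigma>] by (auto simp: H_def K_def)
  show ?thesis
  proof (rule convex_onI)
    fix l x y :: real assume "0 < l" "l < 1" "x \<in> {0..1}" "y \<in> {0..1}"
    then have "(x, y, l) \<in> K"
      by (simp add: K_def)
    from max_principle[OF compact cont init at_max this, of t] t
    show "v ((1 - l) *\<^sub>R x + l *\<^sub>R y) t \<le> (1 - l) * v x t + l * v y t"
      by (simp add: H_def convexity_defect_def)
  qed simp
qed

section \<open>Monotonicity in \<open>\<gamma>\<close> and the case \<open>\<gamma> = 1\<close>\<close>

lemma convex_on_jump_quotient_mono:
  fixes g :: "real \<Rightarrow> real"
  assumes g: "convex_on {0..1} g" and \<gamma>: "0 < \<gamma>1" "\<gamma>1 \<le> \<gamma>2" "\<gamma>2 \<le> 1" and x: "x \<in> {0..1}"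
  shows "(g (x + \<gamma>1 * (1 - x)) - g x) / \<gamma>1 \<le> (g (x + \<gamma>2 * (1 - x)) - g x) / \<gamma>2"
proof -
  define \<theta> where "\<theta> = \<gamma>1 / \<gamma>2"
  have \<theta>: "0 \<le> \<theta>" "\<theta> \<le> 1"
    using \<gamma> by (auto simp: \<theta>_def)
  have "(1 - \<theta>) * x + \<theta> * (x + \<gamma>2 * (1 - x)) = x + \<gamma>1 * (1 - x)"
    using \<gamma> by (simp add: \<theta>_def field_simps)
  then have "g (x + \<gamma>1 * (1 - x)) \<le> (1 - \<theta>) * g x + \<theta> * g (x + \<gamma>2 * (1 - x))"
    using convex_onD[OF g \<theta> x jump_in_unit_interval[of \<gamma>2 x]] \<gamma> x by simp
  then have "g (x + \<gamma>1 * (1 - x)) - g x \<le> \<theta> * (g (x + \<gamma>2 * (1 - x)) - g x)"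
    by (simp add: algebra_simps)
  then have "(g (x + \<gamma>1 * (1 - x)) - g x) / \<gamma>1 \<le> \<theta> * (g (x + \<gamma>2 * (1 - x)) - g x) / \<gamma>1"
    using \<gamma> by (simp add: divide_right_mono)
  also have "\<dots> = (g (x + \<gamma>2 * (1 - x)) - g x) / \<gamma>2"
    using \<gamma> by (simp add: \<theta>_def)
  finally show ?thesis .
qed

lemma solution_mono_gamma:
  assumes sol1: "is_solution \<sigma> f m \<gamma>1 u1" and sol2: "is_solution \<sigma> f m \<gamma>2 u2"
    and \<gamma>: "0 < \<gamma>1" "\<gamma>1 \<le> \<gamma>2" "\<gamma>2 \<le> 1" and mf: "m * f \<ge> 0" and \<sigma>: "\<sigma> \<ge> 0"
    and x: "x \<in> {0..1}" and t: "t \<ge> 0"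
  shows "u1 x t \<le> u2 x t"
proof -
  have "supersolution \<sigma> f m \<gamma>1 t 0 u2"
    unfolding supersolution_def
  proof (intro ballI)
    fix y s :: real assume y: "y \<in> {0..1}" and s: "s \<in> {0<..t}"
    then obtain Dx Dt where p: "partials_at u2 y s Dx Dt" "residual \<sigma> f m \<gamma>2 u2 y s Dx Dt = 0"
      using solution_partials[OF sol2 y] by auto
    have "(u2 (y + \<gamma>1 * (1 - y)) s - u2 y s) / \<gamma>1 \<le> (u2 (y + \<gamma>2 * (1 - y)) s - u2 y s) / \<gamma>2"
      using convex_on_jump_quotient_mono[OF solution_convex_x[OF sol2 _ _ mf \<sigma>] \<gamma> y] \<gamma> s by simp
    from mult_left_mono[OF this mf]
    have "m * f / \<gamma>1 * (u2 (y + \<gamma>1 * (1 - y)) s - u2 y s) \<le> m * f / \<gamma>2 * (u2 (y + \<gamma>2 * (1 - y)) s - u2 y s)"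
      by simp
    with p have "residual \<sigma> f m \<gamma>1 u2 y s Dx Dt \<ge> 0"
      unfolding residual_def by linarith
    with p show "\<exists>Dx Dt. partials_at u2 y s Dx Dt \<and> residual \<sigma> f m \<gamma>1 u2 y s Dx Dt \<ge> 0"
      by blast
  qed
  then have "u1 x t - u2 x t \<le> (0 - 0) * t"
    using solution_initial[OF sol1] solution_initial[OF sol2] t x
    by (intro comparison_principle[OF _ _ mf solution_continuous_on[OF sol1] solution_continuous_on[OF sol2]
          _ solution_sub_super(1)[OF sol1]]) (use \<gamma> in auto)
  then show ?thesis
    by simp
qed

lemma Z_one_partials:
  fixes \<sigma> f m x t :: real
  assumes "0 < \<sigma>" "x \<le> 1" "t \<ge> 0"
  defines "E \<equiv> exp ((\<sigma> - m * f) * t)" and "F \<equiv> exp (\<sigma> * t)"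
  defines "D \<equiv> 1 + (1 - x) * (F - 1)"
  shows "D \<ge> 1"
    and "((\<lambda>y. Z_one \<sigma> f m y t) has_real_derivative E / D\<^sup>2) (at x)"
    and "((\<lambda>s. Z_one \<sigma> f m x s) has_real_derivative
           (1 - x) * E * ((1 - x) * \<sigma> * F - (\<sigma> - m * f) * D) / D\<^sup>2) (at t)"
proof -
  have "F \<ge> 1" using assms by (simp add: F_def)
  then have "(1 - x) * (F - 1) \<ge> 0" using assms by simp
  then show "D \<ge> 1" by (simp add: D_def)
  then have D: "D \<noteq> 0" by simp
  have Zx: "(\<lambda>y. Z_one \<sigma> f m y t) = (\<lambda>y. 1 - (1 - y) * E / (1 + (1 - y) * (F - 1)))"
    by (simp add: Z_one_def E_def F_def)
  show "((\<lambda>y. Z_one \<sigma> f m y t) has_real_derivative E / D\<^sup>2) (at x)"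
    unfolding Zx using D by (auto intro!: derivative_eq_intros simp: D_def field_simps power2_eq_square)
  \<comment> \<open>Opaque names for the exponentials keep the simplifier from rewriting their arguments.\<close>
  define e where "e s = exp ((\<sigma> - m * f) * s)" for s
  define g where "g s = exp (\<sigma> * s)" for s
  have de: "(e has_real_derivative (\<sigma> - m * f) * E) (at t)"
    unfolding e_def E_def by (auto intro!: derivative_eq_intros)
  have dg: "(g has_real_derivative \<sigma> * F) (at t)"
    unfolding g_def F_def by (auto intro!: derivative_eq_intros)
  have Zt: "(\<lambda>s. Z_one \<sigma> f m x s) = (\<lambda>s. 1 - (1 - x) * e s / (1 + (1 - x) * (g s - 1)))"
    by (simp add: Z_one_def e_def g_def)
  have "e t = E" "g t = F"
    by (simp_all add: e_def E_def g_def F_def)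
  then show "((\<lambda>s. Z_one \<sigma> f m x s) has_real_derivative
           (1 - x) * E * ((1 - x) * \<sigma> * F - (\<sigma> - m * f) * D) / D\<^sup>2) (at t)"
    unfolding Zt using D
    by (auto intro!: derivative_eq_intros de dg simp: D_def power2_eq_square algebra_simps minus_divide_left)
qed

lemma Z_one_sub_super:
  assumes "0 < \<sigma>"
  shows "subsolution \<sigma> f m 1 T 0 (Z_one \<sigma> f m)" "supersolution \<sigma> f m 1 T 0 (Z_one \<sigma> f m)"
proof -
  have "\<exists>Dx Dt. partials_at (Z_one \<sigma> f m) x t Dx Dt \<and> residual \<sigma> f m 1 (Z_one \<sigma> f m) x t Dx Dt = 0"
    if x: "x \<in> {0..1}" and t: "t > 0" for x t
  proof (intro exI conjI)
    define E where "E = exp ((\<sigma> - m * f) * t)"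
    define F where "F = exp (\<sigma> * t)"
    define D where "D = 1 + (1 - x) * (F - 1)"
    have "x \<le> 1" "t \<ge> 0" using x t by auto
    note Z = Z_one_partials(1)[OF assms this, folded F_def, folded D_def]
      Z_one_partials(2,3)[OF assms this, where f = f and m = m, folded E_def F_def, folded D_def]
    show "partials_at (Z_one \<sigma> f m) x t (E / D\<^sup>2) ((1 - x) * E * ((1 - x) * \<sigma> * F - (\<sigma> - m * f) * D) / D\<^sup>2)"
      unfolding partials_at_def using Z(2,3) by (auto intro: has_field_derivative_at_within)
    have Zx: "Z_one \<sigma> f m x t = 1 - (1 - x) * E / D" and Z1: "Z_one \<sigma> f m (x + 1 * (1 - x)) t = 1"
      by (simp_all add: Z_one_def E_def F_def D_def)
    have "D \<noteq> 0"
      using Z(1) by simp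
    then show "residual \<sigma> f m 1 (Z_one \<sigma> f m) x t (E / D\<^sup>2)
        ((1 - x) * E * ((1 - x) * \<sigma> * F - (\<sigma> - m * f) * D) / D\<^sup>2) = 0"
      unfolding residual_def Zx Z1 by (simp add: field_simps power2_eq_square) (simp add: D_def algebra_simps)
  qed
  then show "subsolution \<sigma> f m 1 T 0 (Z_one \<sigma> f m)" "supersolution \<sigma> f m 1 T 0 (Z_one \<sigma> f m)"
    unfolding subsolution_def supersolution_def by (metis greaterThanAtMost_iff order_refl)+
qed

lemma Z_one_continuous_on:
  assumes "0 < \<sigma>"
  shows "continuous_on ({0..1} \<times> {0..T}) (\<lambda>(x, t). Z_one \<sigma> f m x t)"
proof -
  have "\<forall>p\<in>{0..1} \<times> {0..T}. 1 + (1 - fst p) * (exp (\<sigma> * snd p) - 1) \<noteq> 0"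
    using Z_one_partials(1)[OF assms] by force
  then show ?thesis
    unfolding Z_one_def split_beta' by (auto intro!: continuous_intros)
qed

lemma solution_gamma_one:
  assumes sol: "is_solution \<sigma> f m 1 v" and \<sigma>: "0 < \<sigma>" and mf: "m * f \<ge> 0"
    and x: "x \<in> {0..1}" and t: "t \<ge> 0"
  shows "v x t = Z_one \<sigma> f m x t"
proof -
  have init: "\<forall>x\<in>{0..1}. Z_one \<sigma> f m x 0 = v x 0"
    by (simp add: Z_one_def solution_initial[OF sol])
  note compare = comparison_principle[OF zero_less_one order_refl mf, where T = t and x = x and t = t]
  have "v x t - Z_one \<sigma> f m x t \<le> (0 - 0) * t"
    by (rule compare[OF solution_continuous_on[OF sol] Z_one_continuous_on[OF \<sigma>] _
          solution_sub_super(1)[OF sol] Z_one_sub_super(2)[OF \<sigma>]]) (use init x t in auto)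
  moreover have "Z_one \<sigma> f m x t - v x t \<le> (0 - 0) * t"
    by (rule compare[OF Z_one_continuous_on[OF \<sigma>] solution_continuous_on[OF sol] _
          Z_one_sub_super(1)[OF \<sigma>] solution_sub_super(2)[OF sol]]) (use init x t in auto)
  ultimately show ?thesis
    by simp
qed

section \<open>The limit \<open>\<gamma> \<rightarrow> 0\<close>\<close>

lemma X_lim_partials:
  fixes \<sigma> f m x t :: real
  assumes "m * f < \<sigma>" "0 < \<sigma>" "x \<le> 1" "t \<ge> 0"
  defines "E \<equiv> exp ((\<sigma> - m * f) * t)"
  defines "k \<equiv> \<sigma> / (\<sigma> - m * f) * (E - 1)"
  defines "D \<equiv> 1 + k * (1 - x)"
  shows "0 \<le> k" and "1 \<le> D"
    and "X_lim \<sigma> f m x t = m * f / \<sigma> + (x - m * f / \<sigma>) / D"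
    and "((\<lambda>y. X_lim \<sigma> f m y t) has_real_derivative E / D\<^sup>2) (at x)"
    and "((\<lambda>s. X_lim \<sigma> f m x s) has_real_derivative (m * f - \<sigma> * x) * (1 - x) * E / D\<^sup>2) (at t)"
proof -
  have "E \<ge> 1" using assms by (simp add: E_def)
  then show "0 \<le> k" using assms by (simp add: k_def)
  then have "k * (1 - x) \<ge> 0" using assms by simp
  then show "1 \<le> D" by (simp add: D_def)
  then have D: "D \<noteq> 0" by simp
  have Xx: "(\<lambda>y. X_lim \<sigma> f m y t) = (\<lambda>y. m * f / \<sigma> + (y - m * f / \<sigma>) / (1 + k * (1 - y)))"
    by (auto simp: X_lim_def k_def E_def fun_eq_iff algebra_simps)
  then show "X_lim \<sigma> f m x t = m * f / \<sigma> + (x - m * f / \<sigma>) / D"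
    by (metis D_def)
  have "1 + k * (1 - m * f / \<sigma>) = E"
    using assms by (simp add: k_def field_simps)
  then show "((\<lambda>y. X_lim \<sigma> f m y t) has_real_derivative E / D\<^sup>2) (at x)"
    unfolding Xx using D by (auto intro!: derivative_eq_intros simp: D_def power2_eq_square algebra_simps)
  \<comment> \<open>As for \<open>Z_one\<close>, the time dependence is routed through an opaque function.\<close>
  define kt where "kt s = \<sigma> / (\<sigma> - m * f) * (exp ((\<sigma> - m * f) * s) - 1)" for s
  have dk: "(kt has_real_derivative \<sigma> * E) (at t)"
    unfolding kt_def E_def using assms by (auto intro!: derivative_eq_intros)
  have Xt: "(\<lambda>s. X_lim \<sigma> f m x s) = (\<lambda>s. m * f / \<sigma> + (x - m * f / \<sigma>) / (1 + kt s * (1 - x)))"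
    by (auto simp: X_lim_def kt_def fun_eq_iff algebra_simps)
  have "k = kt t"
    by (simp add: kt_def k_def E_def)
  then show "((\<lambda>s. X_lim \<sigma> f m x s) has_real_derivative (m * f - \<sigma> * x) * (1 - x) * E / D\<^sup>2) (at t)"
    using D \<open>0 < \<sigma>\<close> unfolding Xt D_def
    by (auto intro!: derivative_eq_intros dk simp: power2_eq_square algebra_simps minus_divide_left)
qed

lemma X_lim_residual:
  fixes \<sigma> f m x t :: real
  assumes mf: "m * f < \<sigma>" and \<sigma>: "0 < \<sigma>" and \<gamma>: "0 < \<gamma>" "\<gamma> \<le> 1" and x: "x \<in> {0..1}" and t: "t \<ge> 0"
  defines "E \<equiv> exp ((\<sigma> - m * f) * t)"
  defines "k \<equiv> \<sigma> / (\<sigma> - m * f) * (E - 1)"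
  defines "D \<equiv> 1 + k * (1 - x)" and "D1 \<equiv> 1 + k * (1 - (x + \<gamma> * (1 - x)))"
  shows "residual \<sigma> f m \<gamma> (X_lim \<sigma> f m) x t (E / D\<^sup>2) ((m * f - \<sigma> * x) * (1 - x) * E / D\<^sup>2)
      = - (m * f * (1 - x)\<^sup>2 * E * k * \<gamma> / (D\<^sup>2 * D1))"
proof -
  have x1: "x \<le> 1" and \<phi>1: "x + \<gamma> * (1 - x) \<le> 1"
    using jump_in_unit_interval[of \<gamma> x] \<gamma> x by auto
  note X = X_lim_partials[OF mf \<sigma> x1 t, folded E_def, folded k_def, folded D_def]
  note X\<phi> = X_lim_partials[OF mf \<sigma> \<phi>1 t, folded E_def, folded k_def, folded D1_def]
  have D: "D \<noteq> 0" and D1: "D1 \<noteq> 0"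
    using X(2) X\<phi>(2) by auto
  have drift: "(m * f - \<sigma> * x) * (1 - x) * E / D\<^sup>2 + \<sigma> * x * (1 - x) * (E / D\<^sup>2) = m * f * (1 - x) * E / D\<^sup>2"
    by (simp only: times_divide_eq_right add_divide_distrib[symmetric]) (simp add: algebra_simps)
  define p where "p = m * f / \<sigma>"
  have "(x + \<gamma> * (1 - x) - p) * D - (x - p) * D1 = \<gamma> * (1 - x) * (1 + k * (1 - p))"
    unfolding D_def D1_def by (simp add: algebra_simps)
  also have "1 + k * (1 - p) = E"
    using mf \<sigma> by (simp add: k_def p_def field_simps)
  finally have jump: "X_lim \<sigma> f m (x + \<gamma> * (1 - x)) t - X_lim \<sigma> f m x t = \<gamma> * (1 - x) * E / (D * D1)"
    unfolding X(3) X\<phi>(3) p_def[symmetric] using D D1 by (simp add: field_simps)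
  have "m * f * (1 - x) * E / D\<^sup>2 - m * f / \<gamma> * (\<gamma> * (1 - x) * E / (D * D1))
      = m * f * (1 - x) * E * (D1 - D) / (D\<^sup>2 * D1)"
    using \<gamma> D D1 by (simp add: field_simps power2_eq_square)
  also have "D1 - D = - (k * \<gamma> * (1 - x))"
    unfolding D_def D1_def by (simp add: algebra_simps)
  finally show ?thesis
    unfolding residual_def drift jump by (simp add: power2_eq_square mult_ac)
qed

definition X_lim_error_rate :: "real \<Rightarrow> real \<Rightarrow> real \<Rightarrow> real \<Rightarrow> real" where
  "X_lim_error_rate \<sigma> f m T =
     m * f * exp ((\<sigma> - m * f) * T) * (\<sigma> / (\<sigma> - m * f) * (exp ((\<sigma> - m * f) * T) - 1))"

lemma X_lim_error_rate_mono:
  assumes mf: "m * f < \<sigma>" "0 \<le> m * f" and \<sigma>: "0 < \<sigma>" and t: "0 \<le> t" "t \<le> T"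
  shows "0 \<le> X_lim_error_rate \<sigma> f m t" and "X_lim_error_rate \<sigma> f m t \<le> X_lim_error_rate \<sigma> f m T"
proof -
  have E: "1 \<le> exp ((\<sigma> - m * f) * t)" "exp ((\<sigma> - m * f) * t) \<le> exp ((\<sigma> - m * f) * T)"
    using mf t by (auto intro!: mult_left_mono)
  have c: "0 \<le> \<sigma> / (\<sigma> - m * f)"
    using mf \<sigma> by simp
  have k: "0 \<le> \<sigma> / (\<sigma> - m * f) * (exp ((\<sigma> - m * f) * t) - 1)"
    "\<sigma> / (\<sigma> - m * f) * (exp ((\<sigma> - m * f) * t) - 1) \<le> \<sigma> / (\<sigma> - m * f) * (exp ((\<sigma> - m * f) * T) - 1)"
    by (rule mult_nonneg_nonneg[OF c], use E in simp, rule mult_left_mono[OF _ c], use E in simp)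
  show "0 \<le> X_lim_error_rate \<sigma> f m t"
    unfolding X_lim_error_rate_def by (rule mult_nonneg_nonneg[OF mult_nonneg_nonneg[OF mf(2)] k(1)]) simp
  show "X_lim_error_rate \<sigma> f m t \<le> X_lim_error_rate \<sigma> f m T"
    unfolding X_lim_error_rate_def
    by (rule mult_mono[OF mult_left_mono[OF E(2) mf(2)] k(2) _ k(1)]) (use mf(2) in simp)
qed

lemma X_lim_sub_super:
  assumes mf: "m * f < \<sigma>" "0 \<le> m * f" and \<sigma>: "0 < \<sigma>" and \<gamma>: "0 < \<gamma>" "\<gamma> \<le> 1"
  shows "subsolution \<sigma> f m \<gamma> T 0 (X_lim \<sigma> f m)"
    and "supersolution \<sigma> f m \<gamma> T (- (X_lim_error_rate \<sigma> f m T * \<gamma>)) (X_lim \<sigma> f m)"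
proof -
  have "\<exists>Dx Dt. partials_at (X_lim \<sigma> f m) x t Dx Dt \<and>
      - (X_lim_error_rate \<sigma> f m T * \<gamma>) \<le> residual \<sigma> f m \<gamma> (X_lim \<sigma> f m) x t Dx Dt \<and>
      residual \<sigma> f m \<gamma> (X_lim \<sigma> f m) x t Dx Dt \<le> 0"
    if x: "x \<in> {0..1}" and t: "t \<in> {0<..T}" for x t
  proof (intro exI conjI)
    define E where "E = exp ((\<sigma> - m * f) * t)"
    define k where "k = \<sigma> / (\<sigma> - m * f) * (E - 1)"
    define D where "D = 1 + k * (1 - x)"
    define D1 where "D1 = 1 + k * (1 - (x + \<gamma> * (1 - x)))"
    have x1: "x \<le> 1" and \<phi>1: "x + \<gamma> * (1 - x) \<le> 1" and t0: "0 \<le> t"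
      using jump_in_unit_interval[of \<gamma> x] \<gamma> x t by auto
    note X = X_lim_partials[OF mf(1) \<sigma> x1 t0, folded E_def, folded k_def, folded D_def]
    note X\<phi> = X_lim_partials(2)[OF mf(1) \<sigma> \<phi>1 t0, folded E_def, folded k_def, folded D1_def]
    show "partials_at (X_lim \<sigma> f m) x t (E / D\<^sup>2) ((m * f - \<sigma> * x) * (1 - x) * E / D\<^sup>2)"
      unfolding partials_at_def using X(4,5) by (auto intro: has_field_derivative_at_within)
    define q where "q = (1 - x)\<^sup>2 / (D\<^sup>2 * D1)"
    have "(1 - x)\<^sup>2 \<le> 1"
      using x by (intro power_le_one) auto
    moreover have "1 * 1 \<le> D\<^sup>2 * D1"
      using X(2) X\<phi> by (intro mult_mono one_le_power) auto
    ultimately have q: "0 \<le> q" "q \<le> 1"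
      unfolding q_def by (auto simp: divide_le_eq)
    define N where "N = X_lim_error_rate \<sigma> f m t * \<gamma>"
    have N: "0 \<le> N" "N \<le> X_lim_error_rate \<sigma> f m T * \<gamma>"
      unfolding N_def using X_lim_error_rate_mono[OF mf \<sigma> t0] t \<gamma> by (auto intro: mult_right_mono)
    have "X_lim_error_rate \<sigma> f m t = m * f * E * k"
      by (simp add: X_lim_error_rate_def E_def k_def)
    then have "residual \<sigma> f m \<gamma> (X_lim \<sigma> f m) x t (E / D\<^sup>2) ((m * f - \<sigma> * x) * (1 - x) * E / D\<^sup>2) = - (N * q)"
      unfolding X_lim_residual[OF mf(1) \<sigma> \<gamma> x t0, folded E_def, folded k_def, folded D_def D1_def]
      by (simp add: N_def q_def mult_ac)
    moreover have "0 \<le> N * q" "N * q \<le> N"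
      using N q by (auto intro: mult_left_le)
    ultimately show "residual \<sigma> f m \<gamma> (X_lim \<sigma> f m) x t (E / D\<^sup>2) ((m * f - \<sigma> * x) * (1 - x) * E / D\<^sup>2) \<le> 0"
      and "- (X_lim_error_rate \<sigma> f m T * \<gamma>)
          \<le> residual \<sigma> f m \<gamma> (X_lim \<sigma> f m) x t (E / D\<^sup>2) ((m * f - \<sigma> * x) * (1 - x) * E / D\<^sup>2)"
      using N by linarith+
  qed
  then show "subsolution \<sigma> f m \<gamma> T 0 (X_lim \<sigma> f m)"
    and "supersolution \<sigma> f m \<gamma> T (- (X_lim_error_rate \<sigma> f m T * \<gamma>)) (X_lim \<sigma> f m)"
    unfolding subsolution_def supersolution_def by meson+
qed

lemma X_lim_continuous_on:
  assumes "m * f < \<sigma>" "0 < \<sigma>"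
  shows "continuous_on ({0..1} \<times> {0..T}) (\<lambda>(x, t). X_lim \<sigma> f m x t)"
proof -
  have "0 \<le> \<sigma> * (1 - x) / (\<sigma> - m * f) * (exp ((\<sigma> - m * f) * t) - 1)" if "x \<le> 1" "0 \<le> t" for x t
    using assms that by (intro mult_nonneg_nonneg divide_nonneg_pos) auto
  then have "\<forall>p\<in>{0..1} \<times> {0..T}. 1 + \<sigma> * (1 - fst p) / (\<sigma> - m * f) * (exp ((\<sigma> - m * f) * snd p) - 1) \<noteq> 0"
    by (smt (verit) mem_Sigma_iff atLeastAtMost_iff prod.collapse)
  then show ?thesis
    unfolding X_lim_def split_beta' using assms by (auto intro!: continuous_intros)
qed

lemma solution_X_lim_bounds:
  assumes sol: "is_solution \<sigma> f m \<gamma> v" and mf: "m * f < \<sigma>" "0 \<le> m * f" and \<sigma>: "0 < \<sigma>"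
    and \<gamma>: "0 < \<gamma>" "\<gamma> \<le> 1" and x: "x \<in> {0..1}" and t: "t \<in> {0..T}"
  shows "X_lim \<sigma> f m x t \<le> v x t"
    and "v x t - X_lim \<sigma> f m x t \<le> X_lim_error_rate \<sigma> f m T * \<gamma> * t"
proof -
  have init: "\<forall>x\<in>{0..1}. X_lim \<sigma> f m x 0 = v x 0"
    by (simp add: X_lim_def solution_initial[OF sol])
  note compare = comparison_principle[OF \<gamma> mf(2) _ _ _ _ _ x t]
  have "X_lim \<sigma> f m x t - v x t \<le> (0 - 0) * t"
    by (rule compare[OF X_lim_continuous_on[OF mf(1) \<sigma>] solution_continuous_on[OF sol] _
          X_lim_sub_super(1)[OF mf \<sigma> \<gamma>] solution_sub_super(2)[OF sol]]) (use init in simp)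
  then show "X_lim \<sigma> f m x t \<le> v x t"
    by simp
  have "v x t - X_lim \<sigma> f m x t \<le> (0 - - (X_lim_error_rate \<sigma> f m T * \<gamma>)) * t"
    by (rule compare[OF solution_continuous_on[OF sol] X_lim_continuous_on[OF mf(1) \<sigma>] _
          solution_sub_super(1)[OF sol] X_lim_sub_super(2)[OF mf \<sigma> \<gamma>]]) (use init in simp)
  then show "v x t - X_lim \<sigma> f m x t \<le> X_lim_error_rate \<sigma> f m T * \<gamma> * t"
    by simp
qed

section \<open>Continuity in \<open>\<gamma>\<close>\<close>

lemma uniform_limit_compact_parameter:
  fixes F :: "'a::metric_space \<Rightarrow> 'b::metric_space \<Rightarrow> 'c::metric_space"
  assumes "compact A" "compact B" "continuous_on (A \<times> B) (\<lambda>(a, b). F a b)" "a0 \<in> A"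
  shows "uniform_limit B F (F a0) (at a0 within A)"
proof (rule uniform_limitI)
  fix e :: real assume "e > 0"
  have "uniformly_continuous_on (A \<times> B) (\<lambda>(a, b). F a b)"
    using assms by (intro compact_uniformly_continuous compact_Times)
  then obtain d where "d > 0" and d: "\<And>p p'. p \<in> A \<times> B \<Longrightarrow> p' \<in> A \<times> B \<Longrightarrow> dist p' p < d \<Longrightarrow>
      dist ((\<lambda>(a, b). F a b) p') ((\<lambda>(a, b). F a b) p) < e"
    unfolding uniformly_continuous_on_def using \<open>e > 0\<close> by metis
  have "\<forall>b\<in>B. dist (F a b) (F a0 b) < e" if "a \<in> A" "dist a a0 < d" for a
    using d[of "(a0, b)" "(a, b)" for b] that assms(4) by (simp add: dist_Pair_Pair)
  then show "\<forall>\<^sub>F a in at a0 within A. \<forall>b\<in>B. dist (F a b) (F a0 b) < e"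
    unfolding eventually_at using \<open>d > 0\<close> by blast
qed

lemma jump_quotient_uniform_limit:
  fixes w :: "real \<Rightarrow> real \<Rightarrow> real"
  assumes w: "continuous_on ({0..1} \<times> {0..T}) (\<lambda>(x, t). w x t)" and \<gamma>0: "0 < \<gamma>0" "\<gamma>0 \<le> 1"
  shows "uniform_limit ({0..1} \<times> {0..T}) (\<lambda>\<gamma> (x, t). (w (x + \<gamma> * (1 - x)) t - w x t) / \<gamma>)
           (\<lambda>(x, t). (w (x + \<gamma>0 * (1 - x)) t - w x t) / \<gamma>0) (at \<gamma>0 within {0<..1})"
proof -
  define A where "A = {\<gamma>0 / 2..1}"
  have "at \<gamma>0 within {0<..1} = at \<gamma>0 within A"
    using \<gamma>0 by (intro at_within_nhd[of _ "{\<gamma>0 / 2<..}"]) (auto simp: A_def)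
  moreover have "continuous_on (A \<times> ({0..1} \<times> {0..T}))
      (\<lambda>(\<gamma>, p). (\<lambda>(x, t). (w (x + \<gamma> * (1 - x)) t - w x t) / \<gamma>) p)"
  proof -
    have "continuous_on (A \<times> ({0..1} \<times> {0..T})) (\<lambda>q. w (fst (snd q) + fst q * (1 - fst (snd q))) (snd (snd q)))"
      "continuous_on (A \<times> ({0..1} \<times> {0..T})) (\<lambda>q. w (fst (snd q)) (snd (snd q)))"
      using \<gamma>0 jump_in_unit_interval
      by (auto intro!: continuous_on_compose_rectangle[OF w] continuous_intros simp: A_def)
    then show ?thesis
      using \<gamma>0 by (auto intro!: continuous_intros simp: split_beta' A_def)
  qed
  ultimately show ?thesis
    using \<gamma>0 by (auto intro!: uniform_limit_compact_parameter compact_Times simp: A_def)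
qed

lemma solution_stability_gamma:
  fixes v w :: "real \<Rightarrow> real \<Rightarrow> real"
  assumes sol: "is_solution \<sigma> f m \<gamma> v" and sol0: "is_solution \<sigma> f m \<gamma>0 w"
    and \<gamma>: "0 < \<gamma>" "\<gamma> \<le> 1" and mf: "m * f \<ge> 0"
    and close: "\<forall>x\<in>{0..1}. \<forall>t\<in>{0..T}.
      \<bar>(w (x + \<gamma> * (1 - x)) t - w x t) / \<gamma> - (w (x + \<gamma>0 * (1 - x)) t - w x t) / \<gamma>0\<bar> \<le> \<eta>"
    and x: "x \<in> {0..1}" and t: "t \<in> {0..T}"
  shows "\<bar>v x t - w x t\<bar> \<le> m * f * \<eta> * t"
proof -
  have "\<exists>Dx Dt. partials_at w y s Dx Dt \<and> \<bar>residual \<sigma> f m \<gamma> w y s Dx Dt\<bar> \<le> m * f * \<eta>"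
    if y: "y \<in> {0..1}" and s: "s \<in> {0<..T}" for y s
  proof -
    obtain Dx Dt where p: "partials_at w y s Dx Dt" "residual \<sigma> f m \<gamma>0 w y s Dx Dt = 0"
      using solution_partials[OF sol0 y] s by auto
    have "m * f / \<gamma> * (w (y + \<gamma> * (1 - y)) s - w y s) = m * f * ((w (y + \<gamma> * (1 - y)) s - w y s) / \<gamma>)"
      "m * f / \<gamma>0 * (w (y + \<gamma>0 * (1 - y)) s - w y s) = m * f * ((w (y + \<gamma>0 * (1 - y)) s - w y s) / \<gamma>0)"
      by simp_all
    with p(2) have "residual \<sigma> f m \<gamma> w y s Dx Dt
        = m * f * ((w (y + \<gamma>0 * (1 - y)) s - w y s) / \<gamma>0 - (w (y + \<gamma> * (1 - y)) s - w y s) / \<gamma>)"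
      unfolding residual_def right_diff_distrib[of "m * f"] by linarith
    also have "\<bar>\<dots>\<bar> \<le> m * f * \<eta>"
      unfolding abs_mult[of "m * f"] abs_of_nonneg[OF mf] using close y s mf
      by (auto simp: abs_minus_commute intro!: mult_left_mono)
    finally show ?thesis
      using p(1) by blast
  qed
  then have sub: "subsolution \<sigma> f m \<gamma> T (m * f * \<eta>) w"
    and super: "supersolution \<sigma> f m \<gamma> T (- (m * f * \<eta>)) w"
    unfolding subsolution_def supersolution_def by (meson abs_le_iff minus_le_iff)+
  have init: "\<forall>x\<in>{0..1}. v x 0 = w x 0"
    using solution_initial[OF sol] solution_initial[OF sol0] by simp
  note compare = comparison_principle[OF \<gamma> mf _ _ _ _ _ x t]
  have "v x t - w x t \<le> (0 - - (m * f * \<eta>)) * t"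
    by (rule compare[OF solution_continuous_on[OF sol] solution_continuous_on[OF sol0] _
          solution_sub_super(1)[OF sol] super]) (use init in simp)
  moreover have "w x t - v x t \<le> (m * f * \<eta> - 0) * t"
    by (rule compare[OF solution_continuous_on[OF sol0] solution_continuous_on[OF sol] _
          sub solution_sub_super(2)[OF sol]]) (use init in simp)
  ultimately show ?thesis
    by simp
qed

lemma solution_uniform_continuity_gamma:
  fixes u :: "real \<Rightarrow> real \<Rightarrow> real \<Rightarrow> real"
  assumes sol: "\<forall>\<gamma>\<in>{0<..1}. is_solution \<sigma> f m \<gamma> (u \<gamma>)" and \<gamma>0: "\<gamma>0 \<in> {0<..1}"
    and mf: "m * f \<ge> 0" and T: "T \<ge> 0"
  shows "uniform_limit ({0..1} \<times> {0..T}) (\<lambda>\<gamma> (x, t). u \<gamma> x t) (\<lambda>(x, t). u \<gamma>0 x t) (at \<gamma>0 within {0<..1})"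
proof (rule uniform_limitI)
  fix e :: real assume "0 < e"
  define \<eta> where "\<eta> = e / (m * f * T + 1)"
  have "0 \<le> m * f * T"
    using mf T by simp
  then have "0 < \<eta>" and small: "m * f * \<eta> * T < e"
    using \<open>0 < e\<close> by (auto simp: \<eta>_def field_simps)
  have sol0: "is_solution \<sigma> f m \<gamma>0 (u \<gamma>0)" and "0 < \<gamma>0" "\<gamma>0 \<le> 1"
    using sol \<gamma>0 by auto
  note jump = uniform_limitD[OF jump_quotient_uniform_limit[OF solution_continuous_on[OF sol0, where T = T]
        \<open>0 < \<gamma>0\<close> \<open>\<gamma>0 \<le> 1\<close>] \<open>0 < \<eta>\<close>]
  have "\<forall>\<^sub>F \<gamma> in at \<gamma>0 within {0<..1}. \<gamma> \<in> {0<..1}"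
    by (simp add: eventually_at_filter)
  with jump show "\<forall>\<^sub>F \<gamma> in at \<gamma>0 within {0<..1}. \<forall>p\<in>{0..1} \<times> {0..T}.
      dist ((\<lambda>(x, t). u \<gamma> x t) p) ((\<lambda>(x, t). u \<gamma>0 x t) p) < e"
  proof eventually_elim
    case (elim \<gamma>)
    have close: "\<forall>x\<in>{0..1}. \<forall>t\<in>{0..T}. \<bar>(u \<gamma>0 (x + \<gamma> * (1 - x)) t - u \<gamma>0 x t) / \<gamma>
        - (u \<gamma>0 (x + \<gamma>0 * (1 - x)) t - u \<gamma>0 x t) / \<gamma>0\<bar> \<le> \<eta>"
      using elim(1) by (auto simp: dist_real_def less_eq_real_def)
    have "\<bar>u \<gamma> x t - u \<gamma>0 x t\<bar> < e" if "x \<in> {0..1}" "t \<in> {0..T}" for x t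
    proof -
      have "\<bar>u \<gamma> x t - u \<gamma>0 x t\<bar> \<le> m * f * \<eta> * t"
        using elim(2) sol by (intro solution_stability_gamma[OF _ sol0 _ _ mf close that]) auto
      also have "\<dots> \<le> m * f * \<eta> * T"
        using that mf \<open>0 < \<eta>\<close> by (intro mult_left_mono) auto
      finally show ?thesis
        using small by linarith
    qed
    then show ?case
      by (auto simp: dist_real_def)
  qed
qed

lemma solution_uniform_limit_X_lim:
  fixes u :: "real \<Rightarrow> real \<Rightarrow> real \<Rightarrow> real"
  assumes sol: "\<forall>\<gamma>\<in>{0<..1}. is_solution \<sigma> f m \<gamma> (u \<gamma>)"
    and mf: "m * f < \<sigma>" "0 \<le> m * f" and \<sigma>: "0 < \<sigma>" and T: "T \<ge> 0"
  shows "uniform_limit ({0..1} \<times> {0..T}) (\<lambda>\<gamma> (x, t). u \<gamma> x t) (\<lambda>(x, t). X_lim \<sigma> f m x t) (at_right 0)"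
proof (rule uniform_limitI)
  fix e :: real assume "0 < e"
  define C where "C = X_lim_error_rate \<sigma> f m T"
  have "0 \<le> C"
    using mf \<sigma> T by (simp add: C_def X_lim_error_rate_def)
  define b where "b = min 1 (e / (C * T + 1))"
  have close: "\<bar>u \<gamma> x t - X_lim \<sigma> f m x t\<bar> < e" if \<gamma>: "\<gamma> \<in> {0<..<b}" and x: "x \<in> {0..1}" and t: "t \<in> {0..T}"
    for \<gamma> x t
  proof -
    have sol\<gamma>: "is_solution \<sigma> f m \<gamma> (u \<gamma>)" and \<gamma>1: "0 < \<gamma>" "\<gamma> \<le> 1"
      using sol \<gamma> by (auto simp: b_def)
    note bounds = solution_X_lim_bounds[OF sol\<gamma> mf \<sigma> \<gamma>1 x t, folded C_def]
    have "C * \<gamma> * t \<le> (C * T) * \<gamma>"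
      using t \<gamma>1 \<open>0 \<le> C\<close> by (simp add: mult.commute mult.left_commute mult_left_mono)
    also have "\<dots> \<le> (C * T) * (e / (C * T + 1))"
      using \<gamma> \<open>0 \<le> C\<close> T by (intro mult_left_mono) (auto simp: b_def)
    also have "\<dots> = e * (C * T / (C * T + 1))"
      by simp
    also have "\<dots> < e * 1"
      using \<open>0 < e\<close> mult_nonneg_nonneg[OF \<open>0 \<le> C\<close> T] by (intro mult_strict_left_mono) auto
    finally have "C * \<gamma> * t < e" by simp
    with bounds show ?thesis
      by simp
  qed
  have "\<forall>\<^sub>F \<gamma> in at_right 0. \<gamma> \<in> {0<..<b}"
    using \<open>0 < e\<close> mult_nonneg_nonneg[OF \<open>0 \<le> C\<close> T] by (intro eventually_at_right_real) (auto simp: b_def)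
  then show "\<forall>\<^sub>F \<gamma> in at_right 0. \<forall>p\<in>{0..1} \<times> {0..T}.
      dist ((\<lambda>(x, t). u \<gamma> x t) p) ((\<lambda>(x, t). X_lim \<sigma> f m x t) p) < e"
    by (rule eventually_mono) (auto simp: dist_real_def close)
qed

theorem proposition4p10:
  fixes \<sigma> f m :: real and u :: "real \<Rightarrow> real \<Rightarrow> real \<Rightarrow> real"
  assumes "\<sigma> > 0" "f > 0" "m > 0" "\<sigma> > m * f"
    and sol: "\<forall>\<gamma>\<in>{0<..1}. is_solution \<sigma> f m \<gamma> (u \<gamma>)"
  shows "(\<forall>x\<in>{0..1}. \<forall>t\<ge>0.
            mono_on {0<..1} (\<lambda>\<gamma>. u \<gamma> x t) \<and>
            continuous_on {0<..1} (\<lambda>\<gamma>. u \<gamma> x t) \<and>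
            u 1 x t = Z_one \<sigma> f m x t \<and>
            ((\<lambda>\<gamma>. u \<gamma> x t) \<longlongrightarrow> X_lim \<sigma> f m x t) (at_right 0))
       \<and> (\<forall>T>0.
            (\<forall>\<gamma>0\<in>{0<..1}. uniform_limit ({0..1} \<times> {0..T}) (\<lambda>\<gamma> (x, t). u \<gamma> x t)
                 (\<lambda>(x, t). u \<gamma>0 x t) (at \<gamma>0 within {0<..1})) \<and>
            uniform_limit ({0..1} \<times> {0..T}) (\<lambda>\<gamma> (x, t). u \<gamma> x t)
                 (\<lambda>(x, t). X_lim \<sigma> f m x t) (at_right 0))"
proof -
  have \<sigma>: "0 < \<sigma>" and mf: "m * f < \<sigma>" "0 \<le> m * f"
    using assms by auto
  note continuity = solution_uniform_continuity_gamma[OF sol _ mf(2)]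
  note limit = solution_uniform_limit_X_lim[OF sol mf \<sigma>]
  show ?thesis
  proof (intro conjI ballI allI impI)
    fix x t :: real assume x: "x \<in> {0..1}" and t: "0 \<le> t"
    then have xt: "(x, t) \<in> {0..1} \<times> {0..t}"
      by simp
    show "mono_on {0<..1} (\<lambda>\<gamma>. u \<gamma> x t)"
      using sol \<sigma> by (intro mono_onI solution_mono_gamma[OF _ _ _ _ _ mf(2) _ x t]) auto
    show "continuous_on {0<..1} (\<lambda>\<gamma>. u \<gamma> x t)"
      unfolding continuous_on_def using tendsto_uniform_limitI[OF continuity xt] t by auto
    show "u 1 x t = Z_one \<sigma> f m x t"
      using solution_gamma_one[OF _ \<sigma> mf(2) x t] sol by simp
    show "((\<lambda>\<gamma>. u \<gamma> x t) \<longlongrightarrow> X_lim \<sigma> f m x t) (at_right 0)"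
      using tendsto_uniform_limitI[OF limit xt] t by simp
  qed (use continuity limit in auto)
qed

end
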